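(* Let $n,m\in\mathbb{N}$ and $f,g:\mathbb{F}_2^n\to\mathbb{F}_2$. Run algorithm $\mathbb{A}^{(m)}(\mathrm{H}^{\otimes n})$ and measure all $2n$ qubits. Then for every $\mathbf{y}\in\mathbb{F}_2^n$ the probability of observing $\ket{\mathbf{y}}\ket{0^n}$ is $2^{-3n}|C^{(m)}_{f,g}(\mathbf{y})|^2$.
   Context: $\zeta_m=e^{2\pi i/m}$, $\overline{\zeta_m}$ its conjugate; $wt$ is Hamming weight; $\mathbf{x}\cdot\mathbf{y}=\bigoplus_i x_iy_i$; $\mathbf{x}\odot\mathbf{y}=\sum_ix_iy_i$ in the integers. $m$-crosscorrelation: $C^{(m)}_{f,g}(\mathbf{y})=\sum_{\mathbf{x}}(-1)^{f(\mathbf{x})\oplus g(\mathbf{x}\oplus\mathbf{y})}(\zeta_m^2)^{\mathbf{x}\odot\mathbf{y}}$. Gates: $\mathrm{H}$ Hadamard; $\Omega_m=\frac{1}{\sqrt2}\begin{pmatrix}1&\zeta_m\\1&-\zeta_m\end{pmatrix}$; $\overline{\Omega}_m=\frac{1}{\sqrt2}\begin{pmatrix}1&\overline{\zeta_m}\\1&-\overline{\zeta_m}\end{pmatrix}$; $U_f$ is the phase oracle $\ket{\mathbf{x}}\mapsto(-1)^{f(\mathbf{x})}\ket{\mathbf{x}}$. Algorithm $\mathbb{A}^{(m)}(\mathrm{C}_n)$, for an $n$-qubit unitary $\mathrm{C}_n$: two $n$-qubit registers start in $\ket{0^n}\ket{0^n}$; apply $\mathrm{C}_n$ to the first register; then on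 the second register run the three-query $m$-Forrelation circuit with the middle oracle replaced by the inner-product phase oracle controlled by the first register, i.e. apply to the second register in order $\mathrm{H}^{\otimes n}$, $U_f$, $\Omega_m^{\otimes n}$, then the two-register gate $\ket{\mathbf{y}}\ket{\mathbf{x}}\mapsto(-1)^{\mathbf{x}\cdot\mathbf{y}}\ket{\mathbf{y}}\ket{\mathbf{x}}$, then $\mathrm{H}^{\otimes n}$, $U_g$, $\overline{\Omega}_m^{\otimes n}$ on the second register; finally measure both registers. *)

theory Defs
  imports "HOL-Analysis.Analysis"
begin

text \<open>Bit strings in F_2^n are boolean lists of length n (True = 1).
  An n-qubit state is an amplitude function on bit strings; a two-register
  state is an amplitude function on pairs (first register, second register).
  A single-qubit gate is given by its matrix entries U r c (row r, column c).\<close>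

type_synonym bits = "bool list"

definition bitvecs :: "nat \<Rightarrow> bits set" where
  "bitvecs n = {xs. length xs = n}"

definition b2n :: "bool \<Rightarrow> nat" where
  "b2n b = (if b then 1 else 0)"

definition xorv :: "bits \<Rightarrow> bits \<Rightarrow> bits" where
  "xorv x y = map2 (\<noteq>) x y"

definition idot :: "bits \<Rightarrow> bits \<Rightarrow> nat" where
  "idot x y = (\<Sum>i<min (length x) (length y). b2n (x ! i) * b2n (y ! i))"

definition fdot :: "bits \<Rightarrow> bits \<Rightarrow> bool" where
  "fdot x y = odd (idot x y)"

definition sgn1 :: "bool \<Rightarrow> complex" where
  "sgn1 b = (if b then -1 else 1)"

definition zeta :: "nat \<Rightarrow> complex" where
  "zeta m = cis (2 * pi / real m)"

definition crosscorr :: "nat \<Rightarrow> nat \<Rightarrow> (bits \<Rightarrow> bool) \<Rightarrow> (bits \<Rightarrow> bool) \<Rightarrow> bits \<Rightarrow> complex" where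
  "crosscorr m n f g y =
     (\<Sum>x\<in>bitvecs n. sgn1 (f x \<noteq> g (xorv x y)) * (zeta m ^ 2) ^ idot x y)"

definition hadamard :: "bool \<Rightarrow> bool \<Rightarrow> complex" where
  "hadamard r c = sgn1 (r \<and> c) / sqrt 2"

definition omega :: "nat \<Rightarrow> bool \<Rightarrow> bool \<Rightarrow> complex" where
  "omega m r c = zeta m ^ b2n c * sgn1 (r \<and> c) / sqrt 2"

definition omega_bar :: "nat \<Rightarrow> bool \<Rightarrow> bool \<Rightarrow> complex" where
  "omega_bar m r c = cnj (zeta m) ^ b2n c * sgn1 (r \<and> c) / sqrt 2"

definition tensor_pow :: "nat \<Rightarrow> (bool \<Rightarrow> bool \<Rightarrow> complex) \<Rightarrow> bits \<Rightarrow> bits \<Rightarrow> complex" where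
  "tensor_pow n U y x = (\<Prod>i<n. U (y ! i) (x ! i))"

definition apply_first :: "nat \<Rightarrow> (bits \<Rightarrow> bits \<Rightarrow> complex) \<Rightarrow> (bits \<times> bits \<Rightarrow> complex) \<Rightarrow> bits \<times> bits \<Rightarrow> complex" where
  "apply_first n M \<Phi> = (\<lambda>(y, x). \<Sum>y'\<in>bitvecs n. M y y' * \<Phi> (y', x))"

definition apply_second :: "nat \<Rightarrow> (bits \<Rightarrow> bits \<Rightarrow> complex) \<Rightarrow> (bits \<times> bits \<Rightarrow> complex) \<Rightarrow> bits \<times> bits \<Rightarrow> complex" where
  "apply_second n M \<Phi> = (\<lambda>(y, x). \<Sum>x'\<in>bitvecs n. M x x' * \<Phi> (y, x'))"

definition oracle_second :: "(bits \<Rightarrow> bool) \<Rightarrow> (bits \<times> bits \<Rightarrow> complex) \<Rightarrow> bits \<times> bits \<Rightarrow> complex" where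
  "oracle_second f \<Phi> = (\<lambda>(y, x). sgn1 (f x) * \<Phi> (y, x))"

definition ip_gate :: "(bits \<times> bits \<Rightarrow> complex) \<Rightarrow> bits \<times> bits \<Rightarrow> complex" where
  "ip_gate \<Phi> = (\<lambda>(y, x). sgn1 (fdot x y) * \<Phi> (y, x))"

definition init_state :: "nat \<Rightarrow> bits \<times> bits \<Rightarrow> complex" where
  "init_state n = (\<lambda>(y, x). if y = replicate n False \<and> x = replicate n False then 1 else 0)"

definition alg_A :: "nat \<Rightarrow> nat \<Rightarrow> (bits \<Rightarrow> bits \<Rightarrow> complex) \<Rightarrow> (bits \<Rightarrow> bool) \<Rightarrow> (bits \<Rightarrow> bool)
                     \<Rightarrow> bits \<times> bits \<Rightarrow> complex" where
  "alg_A m n C f g =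
     (apply_second n (tensor_pow n (omega_bar m)) \<circ>
      oracle_second g \<circ>
      apply_second n (tensor_pow n hadamard) \<circ>
      ip_gate \<circ>
      apply_second n (tensor_pow n (omega m)) \<circ>
      oracle_second f \<circ>
      apply_second n (tensor_pow n hadamard) \<circ>
      apply_first n C) (init_state n)"

definition prob_obs :: "(bits \<times> bits \<Rightarrow> complex) \<Rightarrow> bits \<Rightarrow> bits \<Rightarrow> real" where
  "prob_obs \<Phi> y x = (cmod (\<Phi> (y, x)))\<^sup>2"

end

theory Submission
  imports Defs
begin

text \<open>After \<open>H\<^sup>\<otimes>\<^sup>n\<close> on both registers every basis state \<open>|y\<rangle>|x\<rangle>\<close> has amplitude \<open>2^(-n)\<close>.
  The controlled inner-product gate acts on the second register as \<open>Z^y\<close>, and on each qubit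
  \<open>H Z^b \<Omega>\<^sub>m\<close> sends \<open>|c\<rangle>\<close> to \<open>\<zeta>\<^sub>m^c |c \<oplus> b\<rangle>\<close>.  So the middle block of the circuit is a
  phased shift by \<open>y\<close>, and the amplitude of \<open>|y\<rangle>|0^n\<rangle>\<close> collapses to a single sum over \<open>x\<close>.
  The row \<open>0^n\<close> of \<open>\<Omega>\<^sub>m\<close>-bar contributes the phase \<open>conj \<zeta>\<^sub>m ^ wt (x \<oplus> y)\<close>, and
  \<open>wt (x \<oplus> y) = wt x + wt y - 2 (x \<odot> y)\<close> turns the total phase into
  \<open>conj \<zeta>\<^sub>m ^ wt y * (\<zeta>\<^sub>m\<^sup>2) ^ (x \<odot> y)\<close>.  Hence the amplitude is \<open>2^(-3n/2)\<close> times a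
  unimodular factor times the crosscorrelation.\<close>

lemma bitvecs_Suc: "bitvecs (Suc n) = (\<lambda>(b, xs). b # xs) ` (UNIV \<times> bitvecs n)"
proof (rule set_eqI)
  fix xs :: bits
  show "xs \<in> bitvecs (Suc n) \<longleftrightarrow> xs \<in> (\<lambda>(b, xs). b # xs) ` (UNIV \<times> bitvecs n)"
    by (cases xs) (auto simp: bitvecs_def)
qed

lemma finite_bitvecs [simp]: "finite (bitvecs n)"
  by (induction n) (simp_all add: bitvecs_Suc, simp add: bitvecs_def)

lemma replicate_in_bitvecs [simp]: "replicate n b \<in> bitvecs n"
  by (simp add: bitvecs_def)

lemma xorv_in_bitvecs: "x \<in> bitvecs n \<Longrightarrow> y \<in> bitvecs n \<Longrightarrow> xorv x y \<in> bitvecs n"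
  by (simp add: xorv_def bitvecs_def)

lemma sum_bitvecs_prod:
  fixes h :: "nat \<Rightarrow> bool \<Rightarrow> 'a::comm_semiring_1"
  shows "(\<Sum>x\<in>bitvecs n. \<Prod>i<n. h i (x ! i)) = (\<Prod>i<n. h i False + h i True)"
proof (induction n arbitrary: h)
  case 0
  then show ?case by (simp add: bitvecs_def)
next
  case (Suc n)
  have inj: "inj_on (\<lambda>(b, xs). b # xs) (UNIV \<times> bitvecs n)"
    by (auto simp: inj_on_def)
  have "(\<Sum>x\<in>bitvecs (Suc n). \<Prod>i<Suc n. h i (x ! i))
      = (\<Sum>b\<in>UNIV. \<Sum>xs\<in>bitvecs n. h 0 b * (\<Prod>i<n. h (Suc i) (xs ! i)))"
    unfolding bitvecs_Suc sum.reindex[OF inj] sum.cartesian_product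
    by (simp add: prod.lessThan_Suc_shift case_prod_beta del: prod.lessThan_Suc)
  also have "\<dots> = (\<Sum>b\<in>UNIV. h 0 b * (\<Prod>i<n. h (Suc i) False + h (Suc i) True))"
    by (simp add: Suc.IH[of "\<lambda>i. h (Suc i)"] flip: sum_distrib_left)
  also have "\<dots> = (\<Prod>i<Suc n. h i False + h i True)"
    by (simp add: prod.lessThan_Suc_shift UNIV_bool algebra_simps del: prod.lessThan_Suc)
  finally show ?case .
qed

lemma sum_tensor_pow_diag_tensor_pow:
  "(\<Sum>x\<in>bitvecs n. tensor_pow n U z x * (\<Prod>i<n. D i (x ! i)) * tensor_pow n V x w)
     = (\<Prod>i<n. \<Sum>b\<in>UNIV. U (z ! i) b * D i b * V b (w ! i))"
  unfolding tensor_pow_def prod.distrib[symmetric]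
  by (subst sum_bitvecs_prod) (simp add: UNIV_bool add.commute)

definition weight :: "bits \<Rightarrow> nat" where
  "weight x = (\<Sum>i<length x. b2n (x ! i))"

lemma prod_power_b2n: "length x = n \<Longrightarrow> (\<Prod>i<n. c ^ b2n (x ! i)) = c ^ weight x"
  by (simp add: weight_def power_sum)

lemma sgn1_fdot:
  assumes "length x = n" "length y = n"
  shows "sgn1 (fdot x y) = (\<Prod>i<n. sgn1 (x ! i \<and> y ! i))"
proof -
  have "sgn1 (fdot x y) = (-1) ^ idot x y"
    by (simp add: sgn1_def fdot_def)
  also have "\<dots> = (\<Prod>i<n. sgn1 (x ! i \<and> y ! i))"
    using assms unfolding idot_def power_sum
    by (intro prod.cong) (auto simp: sgn1_def b2n_def)
  finally show ?thesis .
qed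

lemma power_weight_xorv:
  fixes u v :: "'a::comm_monoid_mult"
  assumes "v * u = 1" and "x \<in> bitvecs n" "y \<in> bitvecs n"
  shows "v ^ weight (xorv x y) * u ^ weight x = v ^ weight y * (u\<^sup>2) ^ idot x y"
proof -
  have coord: "v ^ b2n (a \<noteq> b) * u ^ b2n a = v ^ b2n b * (u\<^sup>2) ^ (b2n a * b2n b)" for a b
    using assms(1) by (cases a; cases b) (simp_all add: b2n_def power2_eq_square mult.assoc[symmetric])
  have len: "length x = n" "length y = n" "length (xorv x y) = n"
    using assms(2,3) by (simp_all add: bitvecs_def xorv_def)
  have "v ^ weight (xorv x y) * u ^ weight x = (\<Prod>i<n. v ^ b2n (x ! i \<noteq> y ! i) * u ^ b2n (x ! i))"
    using len by (simp add: prod.distrib xorv_def flip: prod_power_b2n)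
  also have "\<dots> = (\<Prod>i<n. v ^ b2n (y ! i) * (u\<^sup>2) ^ (b2n (x ! i) * b2n (y ! i)))"
    by (simp only: coord)
  also have "\<dots> = v ^ weight y * (u\<^sup>2) ^ idot x y"
    using len by (simp add: prod.distrib idot_def power_sum prod_power_b2n)
  finally show ?thesis .
qed

definition inv_sqrt2 :: complex where
  "inv_sqrt2 = 1 / sqrt 2"

lemma inv_sqrt2_mult_self: "inv_sqrt2 * inv_sqrt2 = 1 / 2"
  by (simp add: inv_sqrt2_def flip: of_real_mult)

lemma norm_inv_sqrt2_power2: "(cmod inv_sqrt2)\<^sup>2 = 1 / 2"
  by (simp add: inv_sqrt2_def norm_divide power_divide)

lemma hadamard_eq: "hadamard r c = sgn1 (r \<and> c) * inv_sqrt2"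
  by (simp add: hadamard_def inv_sqrt2_def)

lemma omega_eq: "omega m r c = zeta m ^ b2n c * sgn1 (r \<and> c) * inv_sqrt2"
  by (simp add: omega_def inv_sqrt2_def)

lemma omega_bar_eq: "omega_bar m r c = cnj (zeta m) ^ b2n c * sgn1 (r \<and> c) * inv_sqrt2"
  by (simp add: omega_bar_def inv_sqrt2_def)

lemma tensor_pow_hadamard_zero: "tensor_pow n hadamard z (replicate n False) = inv_sqrt2 ^ n"
  by (simp add: tensor_pow_def hadamard_eq sgn1_def)

lemma tensor_pow_omega_bar_zero:
  "w \<in> bitvecs n \<Longrightarrow> tensor_pow n (omega_bar m) (replicate n False) w = inv_sqrt2 ^ n * cnj (zeta m) ^ weight w"
  by (simp add: tensor_pow_def omega_bar_eq sgn1_def prod.distrib prod_power_b2n bitvecs_def mult.commute)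

lemma hadamard_phase_omega:
  "(\<Sum>b\<in>UNIV. hadamard a b * sgn1 (b \<and> c) * omega m b d) = (if a = (d \<noteq> c) then zeta m ^ b2n d else 0)"
  using inv_sqrt2_mult_self
  by (cases a; cases c; cases d) (simp_all add: UNIV_bool hadamard_eq omega_eq sgn1_def b2n_def algebra_simps)

lemma hadamard_ip_omega_sum:
  assumes "z \<in> bitvecs n" "y \<in> bitvecs n" "w \<in> bitvecs n"
  shows "(\<Sum>x\<in>bitvecs n. tensor_pow n hadamard z x * sgn1 (fdot x y) * tensor_pow n (omega m) x w)
           = (if z = xorv w y then zeta m ^ weight w else 0)"
proof -
  have len: "length z = n" "length y = n" "length w = n"
    using assms by (simp_all add: bitvecs_def)
  have "(\<Sum>x\<in>bitvecs n. tensor_pow n hadamard z x * sgn1 (fdot x y) * tensor_pow n (omega m) x w)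
      = (\<Sum>x\<in>bitvecs n. tensor_pow n hadamard z x * (\<Prod>i<n. sgn1 (x ! i \<and> y ! i)) * tensor_pow n (omega m) x w)"
    using len by (intro sum.cong) (simp_all add: sgn1_fdot bitvecs_def)
  also have "\<dots> = (\<Prod>i<n. if z ! i = (w ! i \<noteq> y ! i) then zeta m ^ b2n (w ! i) else 0)"
    by (simp only: sum_tensor_pow_diag_tensor_pow[where D = "\<lambda>i b. sgn1 (b \<and> y ! i)"] hadamard_phase_omega)
  also have "\<dots> = (if z = xorv w y then zeta m ^ weight w else 0)"
  proof (cases "z = xorv w y")
    case True
    then show ?thesis
      using len by (simp add: xorv_def prod_power_b2n)
  next
    case False
    then obtain i where "i < n" "z ! i \<noteq> (w ! i \<noteq> y ! i)"
      using len by (auto simp: xorv_def list_eq_iff_nth_eq)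
    then show ?thesis
      using False by (auto intro: prod_zero)
  qed
  finally show ?thesis .
qed

lemma hadamard_both_registers_init_state:
  "apply_second n (tensor_pow n hadamard) (apply_first n (tensor_pow n hadamard) (init_state n))
     = (\<lambda>_. inv_sqrt2 ^ (2 * n))"
proof -
  have "apply_first n (tensor_pow n hadamard) (init_state n)
      = (\<lambda>(y, x). if x = replicate n False then inv_sqrt2 ^ n else 0)"
    by (auto simp: apply_first_def init_state_def tensor_pow_hadamard_zero if_distrib[of "\<lambda>t. _ * t"] cong: if_cong)
  then show ?thesis
    by (auto simp: apply_second_def tensor_pow_hadamard_zero if_distrib[of "\<lambda>t. _ * t"] mult_2 power_add cong: if_cong)
qed

lemma alg_A_hadamard:
  "alg_A m n (tensor_pow n hadamard) f g (y, v)
     = inv_sqrt2 ^ (2 * n) *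
       (\<Sum>z\<in>bitvecs n. tensor_pow n (omega_bar m) v z * sgn1 (g z) *
          (\<Sum>x\<in>bitvecs n. tensor_pow n hadamard z x * sgn1 (fdot x y) *
             (\<Sum>w\<in>bitvecs n. tensor_pow n (omega m) x w * sgn1 (f w))))"
  unfolding alg_A_def comp_def hadamard_both_registers_init_state
  by (simp add: apply_second_def oracle_second_def ip_gate_def sum_distrib_left mult_ac)

lemma hadamard_ip_omega_collapse:
  assumes "y \<in> bitvecs n"
  shows "(\<Sum>z\<in>bitvecs n. a z *
            (\<Sum>x\<in>bitvecs n. tensor_pow n hadamard z x * sgn1 (fdot x y) *
               (\<Sum>w\<in>bitvecs n. tensor_pow n (omega m) x w * c w)))
       = (\<Sum>w\<in>bitvecs n. a (xorv w y) * zeta m ^ weight w * c w)"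
proof -
  have inner: "(\<Sum>x\<in>bitvecs n. tensor_pow n hadamard z x * sgn1 (fdot x y) *
                  (\<Sum>w\<in>bitvecs n. tensor_pow n (omega m) x w * c w))
             = (\<Sum>w\<in>bitvecs n. c w * (if z = xorv w y then zeta m ^ weight w else 0))"
    if "z \<in> bitvecs n" for z
  proof -
    have "(\<Sum>x\<in>bitvecs n. tensor_pow n hadamard z x * sgn1 (fdot x y) *
             (\<Sum>w\<in>bitvecs n. tensor_pow n (omega m) x w * c w))
        = (\<Sum>w\<in>bitvecs n. c w *
             (\<Sum>x\<in>bitvecs n. tensor_pow n hadamard z x * sgn1 (fdot x y) * tensor_pow n (omega m) x w))"
      unfolding sum_distrib_left by (subst sum.swap) (simp add: mult_ac)
    then show ?thesis
      using that assms by (simp add: hadamard_ip_omega_sum)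
  qed
  have "(\<Sum>z\<in>bitvecs n. a z *
            (\<Sum>x\<in>bitvecs n. tensor_pow n hadamard z x * sgn1 (fdot x y) *
               (\<Sum>w\<in>bitvecs n. tensor_pow n (omega m) x w * c w)))
      = (\<Sum>z\<in>bitvecs n. \<Sum>w\<in>bitvecs n. a z * (c w * (if z = xorv w y then zeta m ^ weight w else 0)))"
    by (intro sum.cong refl) (simp only: inner, simp only: sum_distrib_left)
  also have "\<dots> = (\<Sum>w\<in>bitvecs n. \<Sum>z\<in>bitvecs n. a z * (c w * (if z = xorv w y then zeta m ^ weight w else 0)))"
    by (rule sum.swap)
  also have "\<dots> = (\<Sum>w\<in>bitvecs n. a (xorv w y) * zeta m ^ weight w * c w)"
    using assms by (simp add: xorv_in_bitvecs if_distrib[of "\<lambda>t. _ * t"] mult_ac cong: if_cong)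
  finally show ?thesis .
qed

lemma cnj_zeta_mult_zeta: "cnj (zeta m) * zeta m = 1"
  by (simp add: zeta_def cis_cnj cis_mult)

lemma alg_A_hadamard_zero:
  assumes "y \<in> bitvecs n"
  shows "alg_A m n (tensor_pow n hadamard) f g (y, replicate n False)
           = inv_sqrt2 ^ (3 * n) * cnj (zeta m) ^ weight y * crosscorr m n f g y"
proof -
  have summand: "tensor_pow n (omega_bar m) (replicate n False) (xorv w y) * sgn1 (g (xorv w y))
                   * zeta m ^ weight w * sgn1 (f w)
                 = inv_sqrt2 ^ n * cnj (zeta m) ^ weight y
                   * (sgn1 (f w \<noteq> g (xorv w y)) * (zeta m ^ 2) ^ idot w y)"
    if "w \<in> bitvecs n" for w
  proof -
    have "cnj (zeta m) ^ weight (xorv w y) * zeta m ^ weight w = cnj (zeta m) ^ weight y * (zeta m ^ 2) ^ idot w y"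
      using power_weight_xorv[OF cnj_zeta_mult_zeta that assms] .
    then show ?thesis
      using that assms
      by (simp add: tensor_pow_omega_bar_zero xorv_in_bitvecs) (simp add: sgn1_def)
  qed
  have power3_split: "inv_sqrt2 ^ (3 * n) = inv_sqrt2 ^ (2 * n) * inv_sqrt2 ^ n"
    by (simp flip: power_add)
  have "alg_A m n (tensor_pow n hadamard) f g (y, replicate n False)
      = inv_sqrt2 ^ (2 * n) *
        (\<Sum>w\<in>bitvecs n. tensor_pow n (omega_bar m) (replicate n False) (xorv w y) * sgn1 (g (xorv w y))
                          * zeta m ^ weight w * sgn1 (f w))"
    unfolding alg_A_hadamard hadamard_ip_omega_collapse[OF assms] ..
  also have "\<dots> = inv_sqrt2 ^ (2 * n) *
        (\<Sum>w\<in>bitvecs n. inv_sqrt2 ^ n * cnj (zeta m) ^ weight y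
                          * (sgn1 (f w \<noteq> g (xorv w y)) * (zeta m ^ 2) ^ idot w y))"
    by (simp only: summand cong: sum.cong)
  also have "\<dots> = inv_sqrt2 ^ (3 * n) * cnj (zeta m) ^ weight y * crosscorr m n f g y"
    unfolding crosscorr_def sum_distrib_left power3_split
    by (simp add: mult_ac)
  finally show ?thesis .
qed

theorem theorem9:
  fixes n m :: nat and f g :: "bits \<Rightarrow> bool" and y :: bits
  assumes "0 < m"
    and "y \<in> bitvecs n"
  shows "prob_obs (alg_A m n (tensor_pow n hadamard) f g) y (replicate n False)
           = (cmod (crosscorr m n f g y))\<^sup>2 / 2 ^ (3 * n)"
proof -
  have "prob_obs (alg_A m n (tensor_pow n hadamard) f g) y (replicate n False)
      = ((cmod inv_sqrt2)\<^sup>2) ^ (3 * n) * (cmod (crosscorr m n f g y))\<^sup>2"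
    unfolding prob_obs_def alg_A_hadamard_zero[OF assms(2)]
    by (simp add: norm_mult norm_power zeta_def power_mult_distrib flip: power_mult)
  then show ?thesis
    by (simp add: norm_inv_sqrt2_power2 power_one_over)
qed

end
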